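(* Let $f:\mathbb{R}^n\to(-\infty,+\infty]$ be proper, lower semicontinuous and prox-bounded with threshold $\lambda_f>0$, let $0<\lambda<\lambda_f$ and let $U\subseteq\mathbb{R}^n$ be a nonempty open convex set. Then $\partial_p^\lambda f(x)$ is a singleton for every $x\in U$ if and only if $h_\lambda f=f$ on $U$ and $f$ is differentiable on $U$. Consequently, $\partial_p^\lambda f(x)$ is a singleton for every $x\in\mathbb{R}^n$ if and only if $f+\lambda^{-1}j$ is convex and $f$ is differentiable on $\mathbb{R}^n$.
   Context: $j:=\frac12\|\cdot\|^2$. $e_\lambda f(x):=\inf_y\{f(y)+\frac1{2\lambda}\|y-x\|^2\}$; prox-bounded with threshold $\lambda_f=\sup\{\lambda>0:e_\lambda f(x)>-\infty\text{ for some }x\}$. $v\in\partial_p^\lambda f(x)$ iff $x\in\operatorname{dom}f$ and $f(y)\ge f(x)+\langle v,y-x\rangle-\frac1{2\lambda}\|y-x\|^2$ for all $y$. $h_\lambda f:=-e_\lambda(-e_\lambda f)$ is the $\lambda$-proximal hull; $f$ is called $\lambda$-proximal at a point if $h_\lambda f$ and $f$ agree there. *)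

theory Defs
  imports "HOL-Analysis.Analysis"
begin

text \<open>Extended-real valued functions f : R^n -> (-inf,+inf] are modelled as
  functions into ereal that never take the value -infinity.\<close>

definition proper_fun :: "('a \<Rightarrow> ereal) \<Rightarrow> bool" where
  "proper_fun f \<longleftrightarrow> (\<forall>x. f x \<noteq> -\<infinity>) \<and> (\<exists>x. f x \<noteq> \<infinity>)"

definition lsc_fun :: "('a::topological_space \<Rightarrow> ereal) \<Rightarrow> bool" where
  "lsc_fun f \<longleftrightarrow> (\<forall>x. f x \<le> Liminf (at x) f)"

definition moreau_env :: "real \<Rightarrow> ('a::real_normed_vector \<Rightarrow> ereal) \<Rightarrow> 'a \<Rightarrow> ereal" where
  "moreau_env lam f x = (INF y. f y + ereal ((norm (y - x))\<^sup>2 / (2 * lam)))"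

definition prox_bounded :: "('a::real_normed_vector \<Rightarrow> ereal) \<Rightarrow> bool" where
  "prox_bounded f \<longleftrightarrow> (\<exists>lam>0. \<exists>x. moreau_env lam f x > -\<infinity>)"

definition prox_threshold :: "('a::real_normed_vector \<Rightarrow> ereal) \<Rightarrow> ereal" where
  "prox_threshold f = Sup {ereal lam | lam. lam > 0 \<and> (\<exists>x. moreau_env lam f x > -\<infinity>)}"

definition prox_subdiff :: "real \<Rightarrow> ('a::real_inner \<Rightarrow> ereal) \<Rightarrow> 'a \<Rightarrow> 'a set" where
  "prox_subdiff lam f x = {v. f x \<noteq> \<infinity> \<and>
      (\<forall>y. f y \<ge> f x + ereal (inner v (y - x) - (norm (y - x))\<^sup>2 / (2 * lam)))}"

definition prox_hull :: "real \<Rightarrow> ('a::real_normed_vector \<Rightarrow> ereal) \<Rightarrow> 'a \<Rightarrow> ereal" where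
  "prox_hull lam f = (\<lambda>x. - moreau_env lam (\<lambda>z. - moreau_env lam f z) x)"

definition ereal_convex :: "('a::real_vector \<Rightarrow> ereal) \<Rightarrow> bool" where
  "ereal_convex g \<longleftrightarrow> (\<forall>x y t. 0 \<le> t \<and> t \<le> 1 \<longrightarrow>
      g ((1 - t) *\<^sub>R x + t *\<^sub>R y) \<le> ereal (1 - t) * g x + ereal t * g y)"

definition ereal_differentiable_on :: "('a::real_normed_vector \<Rightarrow> ereal) \<Rightarrow> 'a set \<Rightarrow> bool" where
  "ereal_differentiable_on f U \<longleftrightarrow> (\<forall>x\<in>U. \<bar>f x\<bar> \<noteq> \<infinity> \<and>
      (\<lambda>z. real_of_ereal (f z)) differentiable (at x))"

end

theory Submission
  imports Defs
begin

(* Write G = f + j/lam, a real function on dom f. A vector v is a lam-proximal subgradient of f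
   at x exactly when v + x/lam is a subgradient of G at x relative to dom f, so the theorem is
   about subgradients of G.
   If G has a unique subgradient at every point of U, then G is convex on U, the subgradient
   selection is locally bounded with closed graph, hence continuous, and this makes G
   differentiable; a proximal subgradient at x also forces h_lam f x = f x.
   Conversely, h_lam f = f at p says that the affine minorants e_lam f(z) - |z - .|^2/(2 lam)
   + |.|^2/(2 lam) of G approximate G at p, so G lies below its chords through p. Near a point
   of differentiability this yields the gradient inequality, and the derivative is the unique
   subgradient. On the whole space, subgradients everywhere make G convex, and a convex
   differentiable G has its gradient as unique subgradient. *)

section \<open>Subgradients of real functions\<close>

definition subgradient :: "'a set \<Rightarrow> ('a::real_inner \<Rightarrow> real) \<Rightarrow> 'a \<Rightarrow> 'a \<Rightarrow> bool" where
  "subgradient D G x w \<longleftrightarrow> x \<in> D \<and> (\<forall>y\<in>D. G x + inner w (y - x) \<le> G y)"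

lemma subgradients_imp_convex_on:
  fixes G :: "'a::real_inner \<Rightarrow> real"
  assumes "convex U" and "U \<subseteq> D" and "\<And>x. x \<in> U \<Longrightarrow> \<exists>w. subgradient D G x w"
  shows "convex_on U G"
proof (rule convex_onI[OF _ \<open>convex U\<close>])
  fix t :: real and p q assume t: "0 < t" "t < 1" and pq: "p \<in> U" "q \<in> U"
  define m where "m = (1 - t) *\<^sub>R p + t *\<^sub>R q"
  have "m \<in> U" using \<open>convex U\<close> pq t unfolding m_def by (simp add: convex_def)
  then obtain w where w: "subgradient D G m w" using assms(3) by blast
  have "G m + inner w (p - m) \<le> G p" "G m + inner w (q - m) \<le> G q"
    using w pq \<open>U \<subseteq> D\<close> by (auto simp: subgradient_def)
  then have "(1 - t) * (G m + inner w (p - m)) + t * (G m + inner w (q - m))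
      \<le> (1 - t) * G p + t * G q"
    using t by (intro add_mono mult_left_mono) auto
  moreover have "(1 - t) * inner w (p - m) + t * inner w (q - m) = 0"
    unfolding m_def by (simp add: algebra_simps)
  ultimately show "G ((1 - t) *\<^sub>R p + t *\<^sub>R q) \<le> (1 - t) * G p + t * G q"
    unfolding m_def[symmetric] by (simp add: algebra_simps)
qed

lemma subgradient_norm_le:
  fixes G :: "'a::real_inner \<Rightarrow> real"
  assumes "subgradient D G y w" and "cball y r \<subseteq> D" and "r > 0"
    and "\<And>z. z \<in> cball y r \<Longrightarrow> \<bar>G z\<bar> \<le> M"
  shows "norm w \<le> 2 * M / r"
proof (cases "w = 0")
  case True
  then show ?thesis using assms(4)[of y] \<open>r > 0\<close> by simp
next
  case False
  define z where "z = y + (r / norm w) *\<^sub>R w"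
  have z: "z \<in> cball y r" using False \<open>r > 0\<close> by (simp add: z_def dist_norm)
  have "G y + inner w (z - y) \<le> G z" using assms(1,2) z by (auto simp: subgradient_def)
  moreover have "inner w (z - y) = r * norm w"
    using False by (simp add: z_def power2_norm_eq_inner[symmetric] power2_eq_square)
  ultimately have "r * norm w \<le> 2 * M" using assms(4)[OF z] assms(4)[of y] \<open>r > 0\<close> by force
  then show ?thesis using \<open>r > 0\<close> by (simp add: field_simps)
qed

lemma closedin_subgradient_relation:
  fixes G :: "'a::real_inner \<Rightarrow> real"
  assumes "continuous_on S G" and "S \<subseteq> D"
  shows "closedin (top_of_set (S \<times> T)) {p \<in> S \<times> T. subgradient D G (fst p) (snd p)}"
proof (cases "S = {}")
  case False
  define ineq where "ineq z = {p \<in> S \<times> T. G (fst p) + inner (snd p) (z - fst p) \<le> G z}" for z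
  have eq: "{p \<in> S \<times> T. subgradient D G (fst p) (snd p)} = (\<Inter>z\<in>D. ineq z)"
  proof (intro equalityI subsetI)
    fix p assume "p \<in> {p \<in> S \<times> T. subgradient D G (fst p) (snd p)}"
    then show "p \<in> (\<Inter>z\<in>D. ineq z)" by (auto simp: subgradient_def ineq_def)
  next
    fix p assume p: "p \<in> (\<Inter>z\<in>D. ineq z)"
    obtain s where "s \<in> S" using False by blast
    then have "p \<in> S \<times> T" using p \<open>S \<subseteq> D\<close> by (auto simp: ineq_def)
    then show "p \<in> {p \<in> S \<times> T. subgradient D G (fst p) (snd p)}"
      using p \<open>S \<subseteq> D\<close> by (auto simp: subgradient_def ineq_def)
  qed
  have closed: "closedin (top_of_set (S \<times> T)) (ineq z)" for z
  proof -
    have "continuous_on (S \<times> T) (\<lambda>p. G (fst p))"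
      by (rule continuous_on_compose2[OF \<open>continuous_on S G\<close> continuous_on_fst]) auto
    then have "continuous_on (S \<times> T) (\<lambda>p. G (fst p) + inner (snd p) (z - fst p))"
      by (intro continuous_on_add continuous_on_inner continuous_on_snd continuous_on_diff
          continuous_on_const continuous_on_fst continuous_on_id)
    then have "closedin (top_of_set (S \<times> T))
        ((S \<times> T) \<inter> (\<lambda>p. G (fst p) + inner (snd p) (z - fst p)) -` {..G z})"
      by (rule continuous_closedin_preimage[OF _ closed_atMost])
    moreover have "(S \<times> T) \<inter> (\<lambda>p. G (fst p) + inner (snd p) (z - fst p)) -` {..G z} = ineq z"
      by (simp add: ineq_def set_eq_iff)
    ultimately show ?thesis by simp
  qed
  show ?thesis
    unfolding eq using False \<open>S \<subseteq> D\<close> closed by (intro closedin_INT) auto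
qed simp

lemma convex_on_subgradients_locally_bounded:
  fixes G :: "'a::euclidean_space \<Rightarrow> real"
  assumes "open U" and "convex_on U G" and "U \<subseteq> D" and "x \<in> U"
  obtains r B where "r > 0" and "ball x r \<subseteq> U"
    and "\<And>y w. y \<in> ball x r \<Longrightarrow> subgradient D G y w \<Longrightarrow> norm w \<le> B"
proof -
  obtain e where "e > 0" and e: "cball x e \<subseteq> U"
    using \<open>open U\<close> \<open>x \<in> U\<close> open_contains_cball by blast
  have "continuous_on U G" using assms(1,2) by (rule convex_on_continuous)
  then have "bounded (G ` cball x e)"
    using e by (intro compact_imp_bounded compact_continuous_image
        continuous_on_subset[OF \<open>continuous_on U G\<close>]) auto
  then obtain M where M: "\<And>z. z \<in> cball x e \<Longrightarrow> \<bar>G z\<bar> \<le> M"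
    unfolding bounded_real by blast
  show ?thesis
  proof (rule that[of "e / 2" "4 * M / e"])
    show "e / 2 > 0" and "ball x (e / 2) \<subseteq> U" using \<open>e > 0\<close> e by (auto simp: subset_eq)
    fix y w assume "y \<in> ball x (e / 2)" and w: "subgradient D G y w"
    then have "cball y (e / 2) \<subseteq> cball x e"
      by (subst cball_subset_cball_iff) (auto simp: dist_commute)
    then have "norm w \<le> 2 * M / (e / 2)"
      using e \<open>U \<subseteq> D\<close> M \<open>e > 0\<close> by (intro subgradient_norm_le[OF w]) auto
    then show "norm w \<le> 4 * M / e" by simp
  qed
qed

lemma continuous_on_unique_subgradient:
  fixes G :: "'a::euclidean_space \<Rightarrow> real"
  assumes "open U" and "convex U" and "U \<subseteq> D"
    and sub: "\<And>x. x \<in> U \<Longrightarrow> subgradient D G x (a x)"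
    and uniq: "\<And>x w. x \<in> U \<Longrightarrow> subgradient D G x w \<Longrightarrow> w = a x"
  shows "continuous_on U a"
  unfolding continuous_on_eq_continuous_at[OF \<open>open U\<close>]
proof
  fix x assume "x \<in> U"
  have "convex_on U G"
    by (rule subgradients_imp_convex_on[OF \<open>convex U\<close> \<open>U \<subseteq> D\<close>]) (use sub in blast)
  then obtain r B where "r > 0" and S: "ball x r \<subseteq> U"
    and B: "\<And>y w. y \<in> ball x r \<Longrightarrow> subgradient D G y w \<Longrightarrow> norm w \<le> B"
    using convex_on_subgradients_locally_bounded[OF \<open>open U\<close> _ \<open>U \<subseteq> D\<close> \<open>x \<in> U\<close>] by blast
  let ?S = "ball x r" and ?T = "cball (0::'a) B"
  have aT: "a \<in> ?S \<rightarrow> ?T" using B sub S by auto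
  have graph: "(\<lambda>y. (y, a y)) ` ?S = {p \<in> ?S \<times> ?T. subgradient D G (fst p) (snd p)}"
  proof (intro equalityI subsetI)
    fix p assume "p \<in> (\<lambda>y. (y, a y)) ` ?S"
    then show "p \<in> {p \<in> ?S \<times> ?T. subgradient D G (fst p) (snd p)}"
      using aT sub S by auto
  next
    fix p assume p: "p \<in> {p \<in> ?S \<times> ?T. subgradient D G (fst p) (snd p)}"
    then have "snd p = a (fst p)" using uniq S by auto
    then show "p \<in> (\<lambda>y. (y, a y)) ` ?S"
      using p by (intro image_eqI[where x = "fst p"]) (auto simp: prod_eq_iff)
  qed
  have "continuous_on ?S G"
    using convex_on_continuous[OF \<open>open U\<close> \<open>convex_on U G\<close>] S by (rule continuous_on_subset)
  moreover have "?S \<subseteq> D" using S \<open>U \<subseteq> D\<close> by (rule subset_trans)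
  ultimately have "closedin (top_of_set (?S \<times> ?T)) ((\<lambda>y. (y, a y)) ` ?S)"
    unfolding graph by (rule closedin_subgradient_relation)
  then have "continuous_on ?S a"
    using continuous_closed_graph_eq[OF compact_cball aT] by blast
  then show "isCont a x"
    using \<open>r > 0\<close> centre_in_ball continuous_on_eq_continuous_at open_ball by blast
qed

lemma continuous_subgradient_imp_has_derivative:
  fixes G :: "'a::real_inner \<Rightarrow> real"
  assumes "open U" and "x \<in> U" and sub: "\<And>y. y \<in> U \<Longrightarrow> subgradient D G y (a y)"
    and "isCont a x"
  shows "(G has_derivative inner (a x)) (at x)"
proof -
  let ?R = "\<lambda>y. norm (G y - G x - inner (a x) (y - x)) / norm (y - x)"
  have lim: "((\<lambda>y. norm (a y - a x)) \<longlongrightarrow> 0) (at x)"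
    using \<open>isCont a x\<close> by (intro tendsto_norm_zero LIM_zero) (simp add: isCont_def)
  have bound: "\<forall>\<^sub>F y in at x. ?R y \<le> norm (a y - a x)"
    using eventually_at_in_open'[OF \<open>open U\<close> \<open>x \<in> U\<close>]
  proof eventually_elim
    case (elim y)
    have "0 \<le> G y - G x - inner (a x) (y - x)"
      using sub[OF \<open>x \<in> U\<close>] sub[OF elim] by (auto simp: subgradient_def)
    moreover have "G y - G x - inner (a x) (y - x) \<le> inner (a y - a x) (y - x)"
      using sub[OF elim] sub[OF \<open>x \<in> U\<close>] by (auto simp: subgradient_def inner_diff_left inner_diff_right)
    moreover have "inner (a y - a x) (y - x) \<le> norm (a y - a x) * norm (y - x)"
      by (rule norm_cauchy_schwarz)
    ultimately show ?case by (simp add: divide_le_eq mult_le_cancel_left)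
  qed
  have "(?R \<longlongrightarrow> 0) (at x)"
    by (rule tendsto_sandwich[OF always_eventually bound tendsto_const lim]) simp
  then show ?thesis by (simp add: has_derivative_iff_norm bounded_linear_inner_right)
qed

lemma unique_subgradients_imp_differentiable:
  fixes G :: "'a::euclidean_space \<Rightarrow> real"
  assumes "open U" and "convex U" and uniq: "\<forall>x\<in>U. \<exists>!w. subgradient D G x w" and "x \<in> U"
  shows "G differentiable (at x)"
proof -
  define a where "a y = (THE w. subgradient D G y w)" for y
  have sub: "subgradient D G y (a y)" if "y \<in> U" for y
    unfolding a_def using uniq that by (blast intro: theI')
  have "U \<subseteq> D" using sub by (auto simp: subgradient_def)
  have "continuous_on U a"
    using uniq sub by (intro continuous_on_unique_subgradient[OF assms(1,2) \<open>U \<subseteq> D\<close>]) blast+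
  then have "isCont a x" using assms(1,4) continuous_on_eq_continuous_at by blast
  then show ?thesis
    using continuous_subgradient_imp_has_derivative[OF assms(1,4) sub] by (auto simp: differentiable_def)
qed

lemma eventually_below_chord_imp_above_tangent:
  fixes G :: "'a::real_normed_vector \<Rightarrow> real"
  assumes "(G has_derivative G') (at x)"
    and "\<forall>\<^sub>F t in at_right 0. G ((1 - t) *\<^sub>R x + t *\<^sub>R y) \<le> (1 - t) * G x + t * G y"
  shows "G x + G' (y - x) \<le> G y"
proof -
  define \<phi> where "\<phi> t = G (x + t *\<^sub>R (y - x))" for t
  have "((\<lambda>t. x + t *\<^sub>R (y - x)) has_derivative (\<lambda>t. t *\<^sub>R (y - x))) (at 0)"
    by (auto intro!: derivative_eq_intros)
  moreover have "(G has_derivative G') (at (x + 0 *\<^sub>R (y - x)))" using assms(1) by simp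
  ultimately have "(\<phi> has_derivative (\<lambda>t. G' (t *\<^sub>R (y - x)))) (at 0)"
    unfolding \<phi>_def by (rule has_derivative_compose)
  moreover have "(\<lambda>t. G' (t *\<^sub>R (y - x))) = (\<lambda>t. t * G' (y - x))"
    using has_derivative_linear[OF assms(1)] by (simp add: linear_scale)
  ultimately have "(\<phi> has_real_derivative G' (y - x)) (at 0)"
    by (simp add: has_field_derivative_def mult_commute_abs)
  then have "(\<phi> has_real_derivative G' (y - x)) (at_right 0)"
    by (rule has_field_derivative_at_within)
  then have "((\<lambda>t. (\<phi> t - \<phi> 0) / t) \<longlongrightarrow> G' (y - x)) (at_right 0)"
    by (simp add: has_field_derivative_iff)
  moreover have "\<forall>\<^sub>F t in at_right 0. (\<phi> t - \<phi> 0) / t \<le> G y - G x"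
    using assms(2) eventually_at_right_less[of 0]
  proof eventually_elim
    case (elim t)
    then have "\<phi> t - \<phi> 0 \<le> t * (G y - G x)" by (simp add: \<phi>_def algebra_simps)
    then show ?case using elim by (simp add: divide_le_eq mult.commute)
  qed
  ultimately have "G' (y - x) \<le> G y - G x" by (rule tendsto_upperbound) simp
  then show ?thesis by simp
qed

lemma subgradient_imp_derivative_eq:
  fixes G :: "'a::real_inner \<Rightarrow> real"
  assumes "(G has_derivative G') (at x)" and "open S" and "x \<in> S" and "S \<subseteq> D"
    and "subgradient D G x w"
  shows "G' = inner w"
proof -
  have "((\<lambda>y. G y - inner w y) has_derivative (\<lambda>h. G' h - inner w h)) (at x)"
    using assms(1) bounded_linear_imp_has_derivative[OF bounded_linear_inner_right]
    by (rule has_derivative_diff)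
  moreover have "G x - inner w x \<le> G y - inner w y" if "y \<in> S" for y
  proof -
    have "G x + inner w (y - x) \<le> G y"
      using assms(4,5) \<open>y \<in> S\<close> unfolding subgradient_def by blast
    then show ?thesis by (simp add: inner_diff_right)
  qed
  ultimately have "(\<lambda>h. G' h - inner w h) = (\<lambda>h. 0)"
    using differential_zero_maxmin[OF assms(3,2)] by blast
  then show ?thesis by (simp add: fun_eq_iff)
qed

lemma differentiable_imp_unique_subgradient:
  fixes G :: "'a::euclidean_space \<Rightarrow> real"
  assumes der: "(G has_derivative G') (at x)" and "open S" and "x \<in> S" and "S \<subseteq> D"
    and chord: "\<And>y t. y \<in> D \<Longrightarrow> 0 < t \<Longrightarrow> t < 1 \<Longrightarrow> (1 - t) *\<^sub>R x + t *\<^sub>R y \<in> S \<Longrightarrow>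
                  G ((1 - t) *\<^sub>R x + t *\<^sub>R y) \<le> (1 - t) * G x + t * G y"
  shows "\<exists>!w. subgradient D G x w"
proof -
  define w where "w = adjoint G' 1"
  have G': "G' = inner w"
  proof
    fix h show "G' h = inner w h"
      using adjoint_works[OF has_derivative_linear[OF der], of h 1] by (simp add: w_def inner_commute)
  qed
  have "subgradient D G x w"
    unfolding subgradient_def
  proof (intro conjI ballI)
    show "x \<in> D" using assms(3,4) by blast
    fix y assume "y \<in> D"
    have "((\<lambda>t. (1 - t) *\<^sub>R x + t *\<^sub>R y) \<longlongrightarrow> (1 - 0) *\<^sub>R x + 0 *\<^sub>R y) (at_right 0)"
      by (intro tendsto_intros)
    then have "\<forall>\<^sub>F t in at_right 0. (1 - t) *\<^sub>R x + t *\<^sub>R y \<in> S"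
      using topological_tendstoD \<open>open S\<close> \<open>x \<in> S\<close> by fastforce
    moreover have "\<forall>\<^sub>F t::real in at_right 0. 0 < t \<and> t < 1"
      unfolding eventually_at_right[OF zero_less_one] by (intro exI[of _ 1]) auto
    ultimately have "\<forall>\<^sub>F t in at_right 0. G ((1 - t) *\<^sub>R x + t *\<^sub>R y) \<le> (1 - t) * G x + t * G y"
      by eventually_elim (simp add: chord \<open>y \<in> D\<close>)
    from eventually_below_chord_imp_above_tangent[OF der this]
    show "G x + inner w (y - x) \<le> G y" by (simp add: G')
  qed
  moreover have "v = w" if "subgradient D G x v" for v
  proof -
    have "inner v = inner w"
      using subgradient_imp_derivative_eq[OF der assms(2-4) that] G' by simp
    then show "v = w" by (simp add: vector_eq_rdot[symmetric])
  qed
  ultimately show ?thesis by blast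
qed

section \<open>Proximal subgradients and the proximal hull\<close>

definition eff_dom :: "('a \<Rightarrow> ereal) \<Rightarrow> 'a set" where
  "eff_dom f = {x. f x \<noteq> \<infinity>}"

(* The function f + j/lam; since real_of_ereal maps \<infinity> to 0, it is meaningful only on eff_dom f. *)
definition add_sq_norm :: "real \<Rightarrow> ('a::real_normed_vector \<Rightarrow> ereal) \<Rightarrow> 'a \<Rightarrow> real" where
  "add_sq_norm lam f x = real_of_ereal (f x) + (norm x)\<^sup>2 / (2 * lam)"

lemma sq_dist_div_expand:
  fixes y z :: "'a::real_inner"
  shows "(norm (y - z))\<^sup>2 / (2 * lam) = (norm y)\<^sup>2 / (2 * lam) - inner y z / lam + (norm z)\<^sup>2 / (2 * lam)"
proof (cases "lam = 0")
  case False
  have "(norm (y - z))\<^sup>2 = (norm y)\<^sup>2 - 2 * inner y z + (norm z)\<^sup>2"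
    by (simp add: power2_norm_eq_inner inner_diff_left inner_diff_right inner_commute)
  then show ?thesis using False by (simp add: field_simps)
qed simp

lemma plus_sq_dist_eq_add_sq_norm:
  fixes f :: "'a::real_inner \<Rightarrow> ereal"
  assumes "f y \<noteq> -\<infinity>" and "y \<in> eff_dom f"
  shows "f y + ereal ((norm (y - z))\<^sup>2 / (2 * lam))
       = ereal (add_sq_norm lam f y - inner y z / lam + (norm z)\<^sup>2 / (2 * lam))"
  using assms by (cases "f y") (auto simp: eff_dom_def add_sq_norm_def sq_dist_div_expand)

lemma prox_subdiff_iff_subgradient:
  fixes f :: "'a::real_inner \<Rightarrow> ereal"
  assumes "\<forall>x. f x \<noteq> -\<infinity>" and "lam \<noteq> 0"
  shows "v \<in> prox_subdiff lam f x \<longleftrightarrow> subgradient (eff_dom f) (add_sq_norm lam f) x (v + (1 / lam) *\<^sub>R x)"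
proof -
  have ineq_iff: "f x + ereal (inner v (y - x) - (norm (y - x))\<^sup>2 / (2 * lam)) \<le> f y \<longleftrightarrow>
      add_sq_norm lam f x + inner (v + (1 / lam) *\<^sub>R x) (y - x) \<le> add_sq_norm lam f y"
    if dom: "x \<in> eff_dom f" "y \<in> eff_dom f" for y
  proof -
    obtain a b where a: "f x = ereal a" and b: "f y = ereal b"
      using dom assms(1) by (cases "f x"; cases "f y") (auto simp: eff_dom_def)
    have "inner ((1 / lam) *\<^sub>R x) (y - x) = inner y x / lam - (norm x)\<^sup>2 / lam"
      by (simp add: inner_diff_right inner_commute power2_norm_eq_inner diff_divide_distrib)
    moreover have "(norm x)\<^sup>2 / lam = 2 * ((norm x)\<^sup>2 / (2 * lam))"
      using assms(2) by simp
    moreover note sq_dist_div_expand[of y x lam]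
    ultimately have "add_sq_norm lam f y - add_sq_norm lam f x - inner (v + (1 / lam) *\<^sub>R x) (y - x)
        = b - a - inner v (y - x) + (norm (y - x))\<^sup>2 / (2 * lam)"
      unfolding add_sq_norm_def a b inner_add_left real_of_ereal.simps by linarith
    moreover have "f x + ereal (inner v (y - x) - (norm (y - x))\<^sup>2 / (2 * lam)) \<le> f y \<longleftrightarrow>
        a + (inner v (y - x) - (norm (y - x))\<^sup>2 / (2 * lam)) \<le> b"
      by (simp add: a b)
    ultimately show ?thesis by linarith
  qed
  have "v \<in> prox_subdiff lam f x \<longleftrightarrow> x \<in> eff_dom f \<and>
      (\<forall>y\<in>eff_dom f. f x + ereal (inner v (y - x) - (norm (y - x))\<^sup>2 / (2 * lam)) \<le> f y)"
    by (auto simp: prox_subdiff_def eff_dom_def) (metis ereal_less_eq(1))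
  also have "\<dots> \<longleftrightarrow> subgradient (eff_dom f) (add_sq_norm lam f) x (v + (1 / lam) *\<^sub>R x)"
    using ineq_iff by (auto simp: subgradient_def)
  finally show ?thesis .
qed

lemma prox_subdiff_singleton_iff:
  fixes f :: "'a::real_inner \<Rightarrow> ereal"
  assumes "\<forall>x. f x \<noteq> -\<infinity>" and "lam \<noteq> 0"
  shows "(\<exists>v. prox_subdiff lam f x = {v}) \<longleftrightarrow> (\<exists>!w. subgradient (eff_dom f) (add_sq_norm lam f) x w)"
    (is "_ \<longleftrightarrow> (\<exists>!w. ?sub w)")
proof -
  let ?c = "(1 / lam) *\<^sub>R x"
  have iff: "v \<in> prox_subdiff lam f x \<longleftrightarrow> ?sub (v + ?c)" for v
    by (rule prox_subdiff_iff_subgradient[OF assms])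
  show ?thesis
  proof
    assume "\<exists>v. prox_subdiff lam f x = {v}"
    then obtain v where v: "prox_subdiff lam f x = {v}" by blast
    show "\<exists>!w. ?sub w"
    proof (rule ex1I[of _ "v + ?c"])
      show "?sub (v + ?c)" using iff[of v] v by simp
      fix w assume "?sub w"
      then have "w - ?c \<in> prox_subdiff lam f x" using iff[of "w - ?c"] by simp
      then show "w = v + ?c" using v by (simp add: diff_eq_eq)
    qed
  next
    assume "\<exists>!w. ?sub w"
    then obtain w where w: "?sub w" and uniq: "\<And>u. ?sub u \<Longrightarrow> u = w" by blast
    have "prox_subdiff lam f x = {w - ?c}"
    proof (intro equalityI subsetI)
      fix v assume "v \<in> prox_subdiff lam f x"
      then have "v + ?c = w" using iff[of v] uniq by simp
      then show "v \<in> {w - ?c}" by (simp add: eq_diff_eq)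
    next
      fix v assume "v \<in> {w - ?c}"
      then show "v \<in> prox_subdiff lam f x" using iff[of v] w by simp
    qed
    then show "\<exists>v. prox_subdiff lam f x = {v}" by blast
  qed
qed

lemma prox_hull_eq_SUP:
  "prox_hull lam f x = (SUP z. moreau_env lam f z - ereal ((norm (z - x))\<^sup>2 / (2 * lam)))"
proof -
  have "- (- e + ereal c) = e - ereal c" for e :: ereal and c by (cases e) auto
  then show ?thesis
    unfolding prox_hull_def moreau_env_def[of lam "\<lambda>z. - moreau_env lam f z"]
      ereal_SUP_uminus_eq[symmetric] by simp
qed

lemma prox_hull_le: "prox_hull lam f x \<le> f x"
  unfolding prox_hull_eq_SUP
proof (rule SUP_least)
  fix z
  have "moreau_env lam f z \<le> f x + ereal ((norm (x - z))\<^sup>2 / (2 * lam))"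
    unfolding moreau_env_def by (rule INF_lower) simp
  then show "moreau_env lam f z - ereal ((norm (z - x))\<^sup>2 / (2 * lam)) \<le> f x"
    by (simp add: ereal_minus_le norm_minus_commute)
qed

lemma subgradient_imp_prox_hull_ge:
  fixes f :: "'a::real_inner \<Rightarrow> ereal"
  assumes "\<forall>x. f x \<noteq> -\<infinity>" and "lam \<noteq> 0"
    and sub: "subgradient (eff_dom f) (add_sq_norm lam f) x w"
  shows "f x \<le> prox_hull lam f x"
proof -
  define z where "z = lam *\<^sub>R w"
  have "f x + ereal ((norm (x - z))\<^sup>2 / (2 * lam)) \<le> f y + ereal ((norm (y - z))\<^sup>2 / (2 * lam))" for y
  proof (cases "y \<in> eff_dom f")
    case True
    have "x \<in> eff_dom f" using sub by (simp add: subgradient_def)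
    moreover have "inner u z / lam = inner u w" for u using \<open>lam \<noteq> 0\<close> by (simp add: z_def)
    moreover have "add_sq_norm lam f x + inner w (y - x) \<le> add_sq_norm lam f y"
      using sub True by (simp add: subgradient_def)
    ultimately show ?thesis
      using True assms(1) by (simp add: plus_sq_dist_eq_add_sq_norm inner_diff_right inner_commute)
  qed (simp add: eff_dom_def)
  then have "f x + ereal ((norm (x - z))\<^sup>2 / (2 * lam)) \<le> moreau_env lam f z"
    unfolding moreau_env_def by (rule INF_greatest)
  then have "f x \<le> moreau_env lam f z - ereal ((norm (z - x))\<^sup>2 / (2 * lam))"
    by (simp add: ereal_le_minus norm_minus_commute)
  also have "\<dots> \<le> prox_hull lam f x"
    unfolding prox_hull_eq_SUP by (rule SUP_upper) simp
  finally show ?thesis .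
qed

lemma prox_hull_eq_imp_below_chord:
  fixes f :: "'a::real_inner \<Rightarrow> ereal"
  assumes "\<forall>x. f x \<noteq> -\<infinity>" and x: "x \<in> eff_dom f" and y: "y \<in> eff_dom f" and "0 \<le> t" and "t \<le> 1"
    and pD: "(1 - t) *\<^sub>R x + t *\<^sub>R y \<in> eff_dom f"
    and hull: "prox_hull lam f ((1 - t) *\<^sub>R x + t *\<^sub>R y) = f ((1 - t) *\<^sub>R x + t *\<^sub>R y)"
  shows "add_sq_norm lam f ((1 - t) *\<^sub>R x + t *\<^sub>R y)
      \<le> (1 - t) * add_sq_norm lam f x + t * add_sq_norm lam f y"
proof (rule field_le_epsilon)
  fix \<epsilon> :: real assume "\<epsilon> > 0"
  define p where "p = (1 - t) *\<^sub>R x + t *\<^sub>R y"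
  let ?G = "add_sq_norm lam f" and ?q = "\<lambda>u. (norm u)\<^sup>2 / (2 * lam)"
  obtain c where c: "f p = ereal c" using assms(1) pD by (cases "f p") (auto simp: eff_dom_def p_def)
  have "ereal (c - \<epsilon>) < prox_hull lam f p" using hull c \<open>\<epsilon> > 0\<close> by (simp add: p_def)
  then obtain z where z: "ereal (c - \<epsilon>) < moreau_env lam f z - ereal (?q (z - p))"
    by (auto simp: prox_hull_eq_SUP less_SUP_iff)
  have env_le: "moreau_env lam f z \<le> ereal (?G u - inner u z / lam + ?q z)" if "u \<in> eff_dom f" for u
  proof -
    have "moreau_env lam f z \<le> f u + ereal (?q (u - z))"
      unfolding moreau_env_def by (rule INF_lower) simp
    then show ?thesis using plus_sq_dist_eq_add_sq_norm assms(1) that by metis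
  qed
  obtain e where e: "moreau_env lam f z = ereal e"
    using z env_le[OF x] by (cases "moreau_env lam f z") auto
  (* aff u = e_lam f z - |z - u|^2/(2 lam) + |u|^2/(2 lam) is affine in u and lies below ?G on
     eff_dom f; at p it comes within \<epsilon> of ?G because h_lam f p = f p. *)
  define k where "k = e - ?q z"
  define aff where "aff u = k + inner u z / lam" for u
  have "aff x \<le> ?G x" and "aff y \<le> ?G y" using env_le[OF x] env_le[OF y] e by (auto simp: aff_def k_def)
  then have chord: "(1 - t) * aff x + t * aff y \<le> (1 - t) * ?G x + t * ?G y"
    using \<open>0 \<le> t\<close> \<open>t \<le> 1\<close> by (intro add_mono mult_left_mono) auto
  have "inner p z / lam = (1 - t) * (inner x z / lam) + t * (inner y z / lam)"
    by (simp add: p_def inner_add_left add_divide_distrib)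
  then have "aff p = (1 - t) * aff x + t * aff y"
    by (simp add: aff_def algebra_simps)
  moreover have "?G p < aff p + \<epsilon>"
    using z e sq_dist_div_expand[of p z lam]
    by (simp add: aff_def k_def add_sq_norm_def c norm_minus_commute)
  ultimately show "?G ((1 - t) *\<^sub>R x + t *\<^sub>R y) \<le> (1 - t) * ?G x + t * ?G y + \<epsilon>"
    using chord unfolding p_def by linarith
qed

lemma ereal_differentiable_on_iff_add_sq_norm:
  fixes f :: "'a::real_inner \<Rightarrow> ereal"
  assumes "\<forall>x. f x \<noteq> -\<infinity>"
  shows "ereal_differentiable_on f U \<longleftrightarrow> U \<subseteq> eff_dom f \<and> (\<forall>x\<in>U. add_sq_norm lam f differentiable (at x))"
proof -
  have q: "(\<lambda>z. (norm z)\<^sup>2 / (2 * lam)) differentiable (at x)" for x :: 'a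
    unfolding power2_norm_eq_inner divide_inverse
    by (intro differentiable_mult differentiable_inner) simp_all
  have "add_sq_norm lam f differentiable (at x) \<longleftrightarrow> (\<lambda>z. real_of_ereal (f z)) differentiable (at x)" for x
  proof
    assume "add_sq_norm lam f differentiable (at x)"
    then have "(\<lambda>z. add_sq_norm lam f z - (norm z)\<^sup>2 / (2 * lam)) differentiable (at x)"
      using q by (rule differentiable_diff)
    then show "(\<lambda>z. real_of_ereal (f z)) differentiable (at x)" by (simp add: add_sq_norm_def)
  next
    assume "(\<lambda>z. real_of_ereal (f z)) differentiable (at x)"
    then have "(\<lambda>z. real_of_ereal (f z) + (norm z)\<^sup>2 / (2 * lam)) differentiable (at x)"
      using q by (rule differentiable_add)
    then show "add_sq_norm lam f differentiable (at x)" by (simp add: add_sq_norm_def[abs_def])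
  qed
  moreover have "\<bar>f x\<bar> \<noteq> \<infinity> \<longleftrightarrow> x \<in> eff_dom f" for x
    using assms by (cases "f x") (auto simp: eff_dom_def)
  ultimately show ?thesis by (auto simp: ereal_differentiable_on_def)
qed

lemma unique_subgradients_on_iff_prox_hull_eq_differentiable:
  fixes f :: "'a::euclidean_space \<Rightarrow> ereal"
  assumes nm: "\<forall>x. f x \<noteq> -\<infinity>" and "lam \<noteq> 0" and "open U" and "convex U"
  shows "(\<forall>x\<in>U. \<exists>!w. subgradient (eff_dom f) (add_sq_norm lam f) x w) \<longleftrightarrow>
         (\<forall>x\<in>U. prox_hull lam f x = f x) \<and> U \<subseteq> eff_dom f \<and>
         (\<forall>x\<in>U. add_sq_norm lam f differentiable (at x))"
    (is "(\<forall>x\<in>U. \<exists>!w. ?sub x w) \<longleftrightarrow> ?hull \<and> U \<subseteq> ?D \<and> ?diff")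
proof
  assume uniq: "\<forall>x\<in>U. \<exists>!w. ?sub x w"
  have "prox_hull lam f x = f x" if "x \<in> U" for x
  proof -
    obtain w where "?sub x w" using uniq \<open>x \<in> U\<close> by blast
    then show ?thesis
      using prox_hull_le subgradient_imp_prox_hull_ge[OF nm \<open>lam \<noteq> 0\<close>] by (blast intro: antisym)
  qed
  moreover have "U \<subseteq> ?D" using uniq by (auto simp: subgradient_def)
  ultimately show "?hull \<and> U \<subseteq> ?D \<and> ?diff"
    using unique_subgradients_imp_differentiable[OF \<open>open U\<close> \<open>convex U\<close> uniq] by blast
next
  let ?G = "add_sq_norm lam f"
  assume "?hull \<and> U \<subseteq> ?D \<and> ?diff"
  then have hull: ?hull and "U \<subseteq> ?D" and diff: ?diff by blast+
  show "\<forall>x\<in>U. \<exists>!w. ?sub x w"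
  proof
    fix x assume "x \<in> U"
    then obtain G' where "(?G has_derivative G') (at x)"
      using diff by (auto simp: differentiable_def)
    then show "\<exists>!w. ?sub x w"
    proof (rule differentiable_imp_unique_subgradient[OF _ \<open>open U\<close> \<open>x \<in> U\<close> \<open>U \<subseteq> ?D\<close>])
      fix y t assume "y \<in> ?D" "0 < t" "t < 1" "(1 - t) *\<^sub>R x + t *\<^sub>R y \<in> U"
      then show "?G ((1 - t) *\<^sub>R x + t *\<^sub>R y) \<le> (1 - t) * ?G x + t * ?G y"
        using prox_hull_eq_imp_below_chord[OF nm] \<open>U \<subseteq> ?D\<close> hull \<open>x \<in> U\<close>
        by (simp add: subset_iff)
    qed
  qed
qed

lemma prox_subdiff_singleton_on_iff:
  fixes f :: "'a::euclidean_space \<Rightarrow> ereal"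
  assumes nm: "\<forall>x. f x \<noteq> -\<infinity>" and "lam \<noteq> 0" and "open U" and "convex U"
  shows "(\<forall>x\<in>U. \<exists>v. prox_subdiff lam f x = {v}) \<longleftrightarrow>
         (\<forall>x\<in>U. prox_hull lam f x = f x) \<and> ereal_differentiable_on f U"
proof -
  have "(\<forall>x\<in>U. \<exists>v. prox_subdiff lam f x = {v}) \<longleftrightarrow>
      (\<forall>x\<in>U. \<exists>!w. subgradient (eff_dom f) (add_sq_norm lam f) x w)"
    using prox_subdiff_singleton_iff[OF nm \<open>lam \<noteq> 0\<close>] by blast
  also have "\<dots> \<longleftrightarrow> (\<forall>x\<in>U. prox_hull lam f x = f x) \<and> U \<subseteq> eff_dom f \<and>
      (\<forall>x\<in>U. add_sq_norm lam f differentiable (at x))"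
    by (rule unique_subgradients_on_iff_prox_hull_eq_differentiable[OF assms])
  also have "\<dots> \<longleftrightarrow> (\<forall>x\<in>U. prox_hull lam f x = f x) \<and> ereal_differentiable_on f U"
    using ereal_differentiable_on_iff_add_sq_norm[OF nm, of U lam] by blast
  finally show ?thesis .
qed

lemma ereal_convex_iff_convex_on:
  fixes f :: "'a::real_inner \<Rightarrow> ereal"
  assumes "\<forall>x. f x \<noteq> -\<infinity>" and "eff_dom f = UNIV"
  shows "ereal_convex (\<lambda>x. f x + ereal ((norm x)\<^sup>2 / (2 * lam))) \<longleftrightarrow>
         convex_on UNIV (add_sq_norm lam f)"
proof -
  have "f x + ereal ((norm x)\<^sup>2 / (2 * lam)) = ereal (add_sq_norm lam f x)" for x
    using plus_sq_dist_eq_add_sq_norm[of f x 0 lam] assms by simp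
  then have "ereal_convex (\<lambda>x. f x + ereal ((norm x)\<^sup>2 / (2 * lam))) \<longleftrightarrow>
      (\<forall>x y t. 0 \<le> t \<and> t \<le> 1 \<longrightarrow>
        add_sq_norm lam f ((1 - t) *\<^sub>R x + t *\<^sub>R y)
          \<le> (1 - t) * add_sq_norm lam f x + t * add_sq_norm lam f y)"
    by (simp add: ereal_convex_def)
  also have "\<dots> \<longleftrightarrow> convex_on UNIV (add_sq_norm lam f)"
    by (auto intro: convex_onI dest: convex_onD)
  finally show ?thesis .
qed

lemma prox_subdiff_singleton_everywhere_iff:
  fixes f :: "'a::euclidean_space \<Rightarrow> ereal"
  assumes nm: "\<forall>x. f x \<noteq> -\<infinity>" and "lam \<noteq> 0"
  shows "(\<forall>x. \<exists>v. prox_subdiff lam f x = {v}) \<longleftrightarrow>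
         ereal_convex (\<lambda>x. f x + ereal ((norm x)\<^sup>2 / (2 * lam))) \<and> ereal_differentiable_on f UNIV"
    (is "_ \<longleftrightarrow> ?conv \<and> ?diff")
proof
  let ?G = "add_sq_norm lam f" and ?D = "eff_dom f"
  assume all: "\<forall>x. \<exists>v. prox_subdiff lam f x = {v}"
  then have uniq: "\<forall>x. \<exists>!w. subgradient ?D ?G x w"
    using prox_subdiff_singleton_iff[OF assms] by blast
  then have "?D = UNIV" by (auto simp: subgradient_def)
  moreover have "convex_on UNIV ?G"
    by (rule subgradients_imp_convex_on[where D = ?D]) (use uniq \<open>?D = UNIV\<close> in auto)
  moreover have ?diff
    using prox_subdiff_singleton_on_iff[OF assms open_UNIV convex_UNIV] all by simp
  ultimately show "?conv \<and> ?diff" using ereal_convex_iff_convex_on[OF nm] by blast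
next
  let ?G = "add_sq_norm lam f" and ?D = "eff_dom f"
  assume "?conv \<and> ?diff"
  then have "?D = UNIV" and diff: "\<forall>x. ?G differentiable (at x)" and ?conv
    using ereal_differentiable_on_iff_add_sq_norm[OF nm, of UNIV lam] by auto
  then have conv: "convex_on UNIV ?G" using ereal_convex_iff_convex_on[OF nm] by blast
  show "\<forall>x. \<exists>v. prox_subdiff lam f x = {v}"
  proof
    fix x
    obtain G' where der: "(?G has_derivative G') (at x)"
      using diff by (auto simp: differentiable_def)
    have "\<exists>!w. subgradient ?D ?G x w"
      by (rule differentiable_imp_unique_subgradient[OF der open_UNIV UNIV_I])
        (use conv \<open>?D = UNIV\<close> in \<open>auto intro: convex_onD\<close>)
    then show "\<exists>v. prox_subdiff lam f x = {v}" using prox_subdiff_singleton_iff[OF assms] by blast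
  qed
qed

theorem mainTheorem8:
  fixes f :: "'a::euclidean_space \<Rightarrow> ereal" and lam :: real
  assumes "proper_fun f" and "lsc_fun f" and "prox_bounded f"
    and "prox_threshold f > 0"
    and "0 < lam" and "ereal lam < prox_threshold f"
  shows "(\<forall>U. open U \<and> convex U \<and> U \<noteq> {} \<longrightarrow>
            ((\<forall>x\<in>U. \<exists>v. prox_subdiff lam f x = {v}) \<longleftrightarrow>
             ((\<forall>x\<in>U. prox_hull lam f x = f x) \<and> ereal_differentiable_on f U)))
       \<and> ((\<forall>x. \<exists>v. prox_subdiff lam f x = {v}) \<longleftrightarrow>
             (ereal_convex (\<lambda>x. f x + ereal ((norm x)\<^sup>2 / (2 * lam)))
              \<and> ereal_differentiable_on f UNIV))"
proof -
  have nm: "\<forall>x. f x \<noteq> -\<infinity>" using \<open>proper_fun f\<close> by (simp add: proper_fun_def)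
  have "lam \<noteq> 0" using \<open>0 < lam\<close> by simp
  show ?thesis
    using prox_subdiff_singleton_on_iff[OF nm \<open>lam \<noteq> 0\<close>]
      prox_subdiff_singleton_everywhere_iff[OF nm \<open>lam \<noteq> 0\<close>]
    by blast
qed

end
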